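(* Let $k\ge 3$ be an odd integer. If $H\in M_{0,1,2,\ldots,k-2,k-1}$, then $H$ has a Fulkerson-cover.
   Context: All graphs are finite. A Fulkerson-cover of a cubic graph is a collection of six perfect matchings such that every edge belongs to exactly two of them. A cubic graph is cyclically 4-edge-connected if at least 4 edges must be removed to disconnect it into two components each containing a circuit. The family $M_{0,1,\ldots,k-1}$ ($k\ge 2$): Let $G_0,G_1,\ldots,G_{k-1}$ be bridgeless, cyclically 4-edge-connected cubic graphs, each having a Fulkerson-cover. In each $G_i$ choose an edge $x_iy_i$, let $x_i^0,x_i^1$ be the two neighbours of $x_i$ other than $y_i$, let $y_i^0,y_i^1$ be the two neighbours of $y_i$ other than $x_i$, and let $H_i=G_i\setminus\{x_i,y_i\}$ (delete the two vertices and their incident edges). The graph $\{G;G_0,\ldots,G_{k-1}\}$ is obtained from the disjoint union of $H_0,\ldots,H_{k-1}$ by adding new vertices $a_j,b_j,c_j$ for $0\le j\le k-1$ and $v_0,\ldots,v_{k-3}$ (none if $k=2$), and the following edges, with indices of $x$ taken modulo $k$: - for each $0\le j\le k-1$: $a_jy_j^0$, $a_jx_{j+1}^0$, $b_jy_j^1$, $b_jx_{j+1}^1$, $a_jc_j$, $b_jc_j$; - the edges of the path $c_1v_0v_1\cdots v_{k-3}c_0$ (for $k=2$ this is the single edge $c_0c_1$); - for each $2\le i\le k-1$: the edge $c_iv_{i-2}$. (Equivalently, it is built recursively: for $k=2$ take the graph above with edge $c_0c_1$; for $i=3,\ldots,k$, add $H_{i-1}$ and $a_{i-1},b_{i-1},c_{i-1}$,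 subdivide the edge at $c_0$ not of the form $a_0c_0,b_0c_0$ by a new vertex $v_{i-3}$, join $c_{i-1}$ to $a_{i-1},b_{i-1},v_{i-3}$, make $a_{i-1}$ adjacent to $x_0^0,y_{i-1}^0$, $b_{i-1}$ adjacent to $x_0^1,y_{i-1}^1$, and replace the edges $a_{i-2}x_0^0$, $b_{i-2}x_0^1$ by $a_{i-2}x_{i-1}^0$, $b_{i-2}x_{i-1}^1$.) $M_{0,1,\ldots,k-1}$ denotes the set of all graphs obtained this way, over all such choices of $G_i$, edges $x_iy_i$ and labelings of neighbours. *)

theory Defs
  imports Main
begin

definition graph :: "'a set \<Rightarrow> 'a set set \<Rightarrow> bool" where
  "graph V E \<longleftrightarrow> finite V \<and> (\<forall>e\<in>E. \<exists>u v. e = {u, v} \<and> u \<noteq> v \<and> u \<in> V \<and> v \<in> V)"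

definition degree :: "'a set set \<Rightarrow> 'a \<Rightarrow> nat" where
  "degree E v = card {e \<in> E. v \<in> e}"

definition cubic :: "'a set \<Rightarrow> 'a set set \<Rightarrow> bool" where
  "cubic V E \<longleftrightarrow> graph V E \<and> (\<forall>v\<in>V. degree E v = 3)"

definition perfect_matching :: "'a set \<Rightarrow> 'a set set \<Rightarrow> 'a set set \<Rightarrow> bool" where
  "perfect_matching V E M \<longleftrightarrow> M \<subseteq> E \<and> (\<forall>v\<in>V. \<exists>!e. e \<in> M \<and> v \<in> e)"

definition has_fulkerson_cover :: "'a set \<Rightarrow> 'a set set \<Rightarrow> bool" where
  "has_fulkerson_cover V E \<longleftrightarrow>
     (\<exists>M :: nat \<Rightarrow> 'a set set. (\<forall>i<6. perfect_matching V E (M i)) \<and>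
        (\<forall>e\<in>E. card {i. i < 6 \<and> e \<in> M i} = 2))"

definition reachable :: "'a set set \<Rightarrow> 'a \<Rightarrow> 'a \<Rightarrow> bool" where
  "reachable E u v \<longleftrightarrow> (\<lambda>a b. {a, b} \<in> E)\<^sup>*\<^sup>* u v"

definition bridgeless :: "'a set \<Rightarrow> 'a set set \<Rightarrow> bool" where
  "bridgeless V E \<longleftrightarrow> (\<forall>e\<in>E. \<forall>u v. e = {u, v} \<longrightarrow> reachable (E - {e}) u v)"

definition has_circuit_in :: "'a set set \<Rightarrow> 'a set \<Rightarrow> bool" where
  "has_circuit_in E S \<longleftrightarrow>
     (\<exists>cs. length cs \<ge> 3 \<and> distinct cs \<and> set cs \<subseteq> S \<and>
        (\<forall>i<length cs. {cs ! i, cs ! ((i + 1) mod length cs)} \<in> E))"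

definition cut_edges :: "'a set set \<Rightarrow> 'a set \<Rightarrow> 'a set set" where
  "cut_edges E S = {e \<in> E. e \<inter> S \<noteq> {} \<and> e - S \<noteq> {}}"

definition cyclically_4_edge_connected :: "'a set \<Rightarrow> 'a set set \<Rightarrow> bool" where
  "cyclically_4_edge_connected V E \<longleftrightarrow>
     (\<forall>S\<subseteq>V. has_circuit_in E S \<and> has_circuit_in E (V - S) \<longrightarrow> card (cut_edges E S) \<ge> 4)"

datatype 'a mvert = Old nat 'a | VA nat | VB nat | VC nat | VV nat

definition valid_choice ::
  "'a set \<Rightarrow> 'a set set \<Rightarrow> 'a \<Rightarrow> 'a \<Rightarrow> 'a \<Rightarrow> 'a \<Rightarrow> 'a \<Rightarrow> 'a \<Rightarrow> bool" where
  "valid_choice V E x y x0 x1 y0 y1 \<longleftrightarrow>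
     {x, y} \<in> E \<and>
     {x, x0} \<in> E \<and> {x, x1} \<in> E \<and> x0 \<noteq> x1 \<and> x0 \<noteq> y \<and> x1 \<noteq> y \<and>
     {y, y0} \<in> E \<and> {y, y1} \<in> E \<and> y0 \<noteq> y1 \<and> y0 \<noteq> x \<and> y1 \<noteq> x"

definition path_edges :: "'b list \<Rightarrow> 'b set set" where
  "path_edges xs = set (map (\<lambda>(a, b). {a, b}) (zip xs (tl xs)))"

definition M_vertices ::
  "nat \<Rightarrow> (nat \<Rightarrow> 'a set) \<Rightarrow> (nat \<Rightarrow> 'a) \<Rightarrow> (nat \<Rightarrow> 'a) \<Rightarrow> 'a mvert set" where
  "M_vertices k V x y =
     {Old i u | i u. i < k \<and> u \<in> V i - {x i, y i}}
     \<union> {VA j | j. j < k} \<union> {VB j | j. j < k} \<union> {VC j | j. j < k}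
     \<union> {VV j | j. j < k - 2}"

definition M_edges ::
  "nat \<Rightarrow> (nat \<Rightarrow> 'a set set) \<Rightarrow> (nat \<Rightarrow> 'a) \<Rightarrow> (nat \<Rightarrow> 'a) \<Rightarrow>
   (nat \<Rightarrow> 'a) \<Rightarrow> (nat \<Rightarrow> 'a) \<Rightarrow> (nat \<Rightarrow> 'a) \<Rightarrow> (nat \<Rightarrow> 'a) \<Rightarrow> 'a mvert set set" where
  "M_edges k E x y x0 x1 y0 y1 =
     {{Old i u, Old i w} | i u w. i < k \<and> {u, w} \<in> E i \<and> u \<notin> {x i, y i} \<and> w \<notin> {x i, y i}}
     \<union> (\<Union>j<k. {{VA j, Old j (y0 j)},
                 {VA j, Old ((j + 1) mod k) (x0 ((j + 1) mod k))},
                 {VB j, Old j (y1 j)},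
                 {VB j, Old ((j + 1) mod k) (x1 ((j + 1) mod k))},
                 {VA j, VC j}, {VB j, VC j}})
     \<union> path_edges ([VC 1] @ map VV [0..<k - 2] @ [VC 0])
     \<union> {{VC i, VV (i - 2)} | i. 2 \<le> i \<and> i < k}"

end

theory Submission
  imports Defs
begin

text \<open>Record the Fulkerson cover of each G_i by the mate functions of its six perfect matchings,
  grouped into three blocks of two.  A matching of G_i is continued through the edges at x_i and
  y_i into the gadget vertices a and b, a gadget vertex left over is matched to its c, and the
  c's left over are matched inside the tree on the c's and v's.  This works when, at the junction
  between G_j and G_(j+1), the matchings containing x_j y_j and those containing x_(j+1) y_(j+1)
  occupy two different blocks, and in the third block the two sides use opposite neighbours
  (index 0 against index 1).  The tree has a perfect matching for each block, missing precisely
  the c's free in the other blocks, when c_0, c_1 and the remaining c_j are free in blocks 0, 1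
  and 2; this needs k odd, as does the alternation of the xy-blocks of G_2, ..., G_(k-1).
  Permuting the matchings of each G_i achieves the alignment, and then every edge of the glued
  graph lies in exactly two of the six glued matchings.\<close>

definition mate :: "'a set set \<Rightarrow> 'a \<Rightarrow> 'a" where
  "mate M v = (THE w. {v, w} \<in> M)"

definition matching_of :: "'a set \<Rightarrow> ('a \<Rightarrow> 'a) \<Rightarrow> 'a set set" where
  "matching_of V p = (\<lambda>v. {v, p v}) ` V"

lemma graph_edge_endpoints: "graph V E \<Longrightarrow> {u, w} \<in> E \<Longrightarrow> u \<noteq> w \<and> u \<in> V \<and> w \<in> V"
  unfolding graph_def by (metis doubleton_eq_iff)

lemma mate_props:
  assumes g: "graph V E" and p: "perfect_matching V E M" and v: "v \<in> V"
  shows "{v, mate M v} \<in> M" "mate M v \<in> V" "mate M v \<noteq> v" "mate M (mate M v) = v"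
    "\<And>w. {v, w} \<in> M \<longleftrightarrow> mate M v = w"
proof -
  from p v obtain e where e: "e \<in> M" "v \<in> e" and uq: "\<And>e'. e' \<in> M \<Longrightarrow> v \<in> e' \<Longrightarrow> e' = e"
    unfolding perfect_matching_def by blast
  have "M \<subseteq> E" using p unfolding perfect_matching_def by blast
  then obtain a b where ab: "e = {a, b}" "a \<noteq> b" "a \<in> V" "b \<in> V"
    using g e unfolding graph_def by blast
  define w where "w = (if a = v then b else a)"
  have ew: "e = {v, w}" "w \<noteq> v" "w \<in> V" using ab e unfolding w_def by auto
  have iff: "\<And>w'. {v, w'} \<in> M \<longleftrightarrow> w' = w"
  proof
    fix w' assume "{v, w'} \<in> M"
    then have "{v, w'} = {v, w}" using uq ew by auto
    then show "w' = w" using ew by (metis doubleton_eq_iff)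
  qed (use e ew in auto)
  then have mw: "mate M v = w" unfolding mate_def by auto
  show "{v, mate M v} \<in> M" "mate M v \<in> V" "mate M v \<noteq> v" using mw ew e by auto
  show "\<And>w'. {v, w'} \<in> M \<longleftrightarrow> mate M v = w'" using iff mw by auto
  from p ew obtain e2 where "e2 \<in> M" "w \<in> e2" and uq2: "\<And>e'. e' \<in> M \<Longrightarrow> w \<in> e' \<Longrightarrow> e' = e2"
    unfolding perfect_matching_def by blast
  have "\<And>u. {w, u} \<in> M \<longleftrightarrow> u = v"
  proof
    fix u assume "{w, u} \<in> M"
    then have "{w, u} = {w, v}" using uq2 ew e by (metis insertI1 insert_commute)
    then show "u = v" using ew by (metis doubleton_eq_iff)
  qed (use e ew in \<open>auto simp: insert_commute\<close>)
  then show "mate M (mate M v) = v" using mw unfolding mate_def by auto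
qed

lemma
  assumes "\<forall>v\<in>V. p v \<in> V \<and> p v \<noteq> v \<and> p (p v) = v \<and> {v, p v} \<in> E"
  shows perfect_matching_matching_of: "perfect_matching V E (matching_of V p)"
    and mem_matching_of_iff: "u \<in> V \<Longrightarrow> {u, w} \<in> matching_of V p \<longleftrightarrow> p u = w"
proof -
  show "perfect_matching V E (matching_of V p)"
    unfolding perfect_matching_def matching_of_def
  proof (intro conjI ballI)
    show "(\<lambda>v. {v, p v}) ` V \<subseteq> E" using assms by auto
    fix v assume v: "v \<in> V"
    show "\<exists>!e. e \<in> (\<lambda>v. {v, p v}) ` V \<and> v \<in> e"
    proof (rule ex1I[of _ "{v, p v}"])
      show "{v, p v} \<in> (\<lambda>v. {v, p v}) ` V \<and> v \<in> {v, p v}" using v by auto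
      fix e assume "e \<in> (\<lambda>v. {v, p v}) ` V \<and> v \<in> e"
      then obtain v' where "v' \<in> V" "e = {v', p v'}" "v \<in> e" by auto
      then show "e = {v, p v}" using assms by auto
    qed
  qed
  assume u: "u \<in> V"
  show "{u, w} \<in> matching_of V p \<longleftrightarrow> p u = w"
  proof
    assume "{u, w} \<in> matching_of V p"
    then obtain v where "v \<in> V" "{u, w} = {v, p v}" unfolding matching_of_def by auto
    then show "p u = w" using assms u by (metis doubleton_eq_iff)
  qed (use u in \<open>auto simp: matching_of_def\<close>)
qed

lemma cubic_neighbour_in:
  assumes c: "cubic V E" and v: "v \<in> V" and e: "{v,a} \<in> E" "{v,b} \<in> E" "{v,c} \<in> E"
    and d: "a \<noteq> b" "a \<noteq> c" "b \<noteq> c" and w: "{v, w} \<in> E"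
  shows "w \<in> {a, b, c}"
proof -
  have g: "graph V E" using c unfolding cubic_def by auto
  have deg: "card {e \<in> E. v \<in> e} = 3" using c v unfolding cubic_def degree_def by auto
  have "finite E"
  proof -
    have "E \<subseteq> Pow V" "finite V" using g unfolding graph_def by auto
    then show ?thesis by (meson finite_Pow_iff finite_subset)
  qed
  moreover have "{{v,a},{v,b},{v,c}} \<subseteq> {e \<in> E. v \<in> e}" using e by auto
  moreover have "card {{v,a},{v,b},{v,c}} = 3" using d by (auto simp: doubleton_eq_iff)
  ultimately have "{{v,a},{v,b},{v,c}} = {e \<in> E. v \<in> e}"
    using deg by (metis (no_types, lifting) card_subset_eq finite_subset mem_Collect_eq subsetI)
  then have "{v, w} \<in> {{v,a},{v,b},{v,c}}" using w by auto
  then show ?thesis by (auto simp: doubleton_eq_iff)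
qed

lemma card_bij_reindex:
  assumes "bij_betw f {..<n} {..<n}"
  shows "card {s. s < n \<and> R (f s)} = card {t. t < n \<and> R t}"
proof -
  have "f ` {s. s < n \<and> R (f s)} = {t. t < n \<and> R t}"
    using assms unfolding bij_betw_def by auto
  moreover have "inj_on f {s. s < n \<and> R (f s)}"
    using assms unfolding bij_betw_def by (auto intro: inj_on_subset)
  ultimately show ?thesis by (metis card_image)
qed

lemma card_filter_add_compl:
  "card {t. t < (n::nat) \<and> P t} + card {t. t < n \<and> \<not> P t} = n"
proof -
  have "card ({t. t < n \<and> P t} \<union> {t. t < n \<and> \<not> P t}) =
     card {t. t < n \<and> P t} + card {t. t < n \<and> \<not> P t}"
    by (rule card_Un_disjoint) auto
  moreover have "{t. t < n \<and> P t} \<union> {t. t < n \<and> \<not> P t} = {..<n}" by auto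
  ultimately show ?thesis by simp
qed

lemma card_neither:
  assumes "\<And>s. s < n \<Longrightarrow> \<not> (A s \<and> B s)"
  shows "card {s. s < (n::nat) \<and> \<not> A s \<and> \<not> B s}
    = n - card {s. s < n \<and> A s} - card {s. s < n \<and> B s}"
proof -
  have "{s. s < n \<and> (A s \<or> B s)} = {s. s < n \<and> A s} \<union> {s. s < n \<and> B s}" by auto
  moreover have "card ({s. s < n \<and> A s} \<union> {s. s < n \<and> B s})
      = card {s. s < n \<and> A s} + card {s. s < n \<and> B s}"
    using assms by (subst card_Un_disjoint) auto
  ultimately show ?thesis using card_filter_add_compl[of n "\<lambda>s. A s \<or> B s"] by simp
qed

lemma card_block: "c < 3 \<Longrightarrow> card {s::nat. s < 6 \<and> s div 2 = c} = 2"
proof -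
  assume "c < 3"
  then have "{s::nat. s < 6 \<and> s div 2 = c} = {2*c, 2*c+1}" by auto
  then show ?thesis by simp
qed

lemma card_eq_4_obtain:
  assumes "card W = 4"
  obtains a b c d where "W = {a,b,c,d}" "distinct [a,b,c,d]"
proof -
  have "card W = Suc (Suc (Suc (Suc 0)))" using assms by simp
  then obtain a W1 where "W = insert a W1" "a \<notin> W1" "card W1 = Suc (Suc (Suc 0))"
    by (metis card_Suc_eq)
  moreover then obtain b W2 where "W1 = insert b W2" "b \<notin> W2" "card W2 = Suc (Suc 0)"
    by (metis card_Suc_eq)
  moreover then obtain c d where "W2 = {c, d}" "c \<noteq> d"
    by (metis card_2_iff numeral_2_eq_2)
  ultimately show ?thesis using that by auto
qed

lemma card_filter_4:
  assumes "distinct [a,b,c,d]"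
  shows "card {t \<in> {a,b,c,d}. P t} = of_bool (P a) + of_bool (P b) + of_bool (P c) + of_bool (P d)"
proof -
  have ins: "{t \<in> insert u A. P t} = (if P u then insert u {t \<in> A. P t} else {t \<in> A. P t})" for u A
    by auto
  show ?thesis
    using assms by (simp only: ins) (cases "P a"; cases "P b"; cases "P c"; cases "P d"; simp)
qed

lemma balanced_pairing:
  assumes W: "card W = 4" and A: "card {w \<in> W. A w} = 2" and B: "card {w \<in> W. B w} = 2"
  obtains p1 p2 p3 p4 where "W = {p1,p2,p3,p4}" "distinct [p1,p2,p3,p4]"
    "A p1 \<noteq> A p2" "B p1 \<noteq> B p2" "A p3 \<noteq> A p4" "B p3 \<noteq> B p4"
proof -
  obtain w1 w2 w3 w4 where w: "W = {w1,w2,w3,w4}" and d: "distinct [w1,w2,w3,w4]"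
    using W by (rule card_eq_4_obtain)
  have "of_bool (A w1) + of_bool (A w2) + of_bool (A w3) + of_bool (A w4) = (2::nat)"
    "of_bool (B w1) + of_bool (B w2) + of_bool (B w3) + of_bool (B w4) = (2::nat)"
    using A B card_filter_4[OF d] unfolding w by simp_all
  then have "(A w1 \<noteq> A w2 \<and> B w1 \<noteq> B w2 \<and> A w3 \<noteq> A w4 \<and> B w3 \<noteq> B w4)
    \<or> (A w1 \<noteq> A w3 \<and> B w1 \<noteq> B w3 \<and> A w2 \<noteq> A w4 \<and> B w2 \<noteq> B w4)
    \<or> (A w1 \<noteq> A w4 \<and> B w1 \<noteq> B w4 \<and> A w2 \<noteq> A w3 \<and> B w2 \<noteq> B w3)"
    by (cases "A w1"; cases "A w2"; cases "A w3"; cases "A w4";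
        cases "B w1"; cases "B w2"; cases "B w3"; cases "B w4") auto
  then show ?thesis
  proof (elim disjE)
    assume "A w1 \<noteq> A w2 \<and> B w1 \<noteq> B w2 \<and> A w3 \<noteq> A w4 \<and> B w3 \<noteq> B w4"
    then show ?thesis using that[of w1 w2 w3 w4] w d by simp
  next
    assume "A w1 \<noteq> A w3 \<and> B w1 \<noteq> B w3 \<and> A w2 \<noteq> A w4 \<and> B w2 \<noteq> B w4"
    then show ?thesis using that[of w1 w3 w2 w4] w d by (auto simp: insert_commute)
  next
    assume "A w1 \<noteq> A w4 \<and> B w1 \<noteq> B w4 \<and> A w2 \<noteq> A w3 \<and> B w2 \<noteq> B w3"
    then show ?thesis using that[of w1 w4 w2 w3] w d by (auto simp: insert_commute)
  qed
qed

locale partner_cover =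
  fixes V :: "'a set" and E :: "'a set set" and x y x0 x1 y0 y1 :: 'a and q :: "nat \<Rightarrow> 'a \<Rightarrow> 'a"
  assumes valid: "valid_choice V E x y x0 x1 y0 y1"
    and graph: "graph V E"
    and x_neighbours: "\<And>w. {x,w} \<in> E \<Longrightarrow> w \<in> {y,x0,x1}"
    and y_neighbours: "\<And>w. {y,w} \<in> E \<Longrightarrow> w \<in> {x,y0,y1}"
    and q_in: "\<And>t v. t < 6 \<Longrightarrow> v \<in> V \<Longrightarrow> q t v \<in> V"
    and q_neq: "\<And>t v. t < 6 \<Longrightarrow> v \<in> V \<Longrightarrow> q t v \<noteq> v"
    and q_q: "\<And>t v. t < 6 \<Longrightarrow> v \<in> V \<Longrightarrow> q t (q t v) = v"
    and q_edge: "\<And>t v. t < 6 \<Longrightarrow> v \<in> V \<Longrightarrow> {v, q t v} \<in> E"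
    and card_q_eq: "\<And>u w. {u,w} \<in> E \<Longrightarrow> card {t. t < 6 \<and> q t u = w} = 2"
begin

lemma choice_edges:
  "{x, y} \<in> E" "{x, x0} \<in> E" "{x, x1} \<in> E" "{y, y0} \<in> E" "{y, y1} \<in> E"
  using valid unfolding valid_choice_def by auto

lemma choice_facts: "x \<in> V" "y \<in> V" "x \<noteq> y" "x0 \<noteq> x" "x1 \<noteq> x" "y0 \<noteq> y" "y1 \<noteq> y"
  "x0 \<noteq> x1" "y0 \<noteq> y1" "x0 \<noteq> y" "x1 \<noteq> y" "y0 \<noteq> x" "y1 \<noteq> x"
  "x0 \<in> V" "x1 \<in> V" "y0 \<in> V" "y1 \<in> V"
  using valid choice_edges graph_edge_endpoints[OF graph] unfolding valid_choice_def by metis+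

lemma q_x: "t < 6 \<Longrightarrow> q t x \<in> {y, x0, x1}"
  using x_neighbours q_edge choice_facts by blast

lemma q_y: "t < 6 \<Longrightarrow> q t y \<in> {x, y0, y1}"
  using y_neighbours q_edge choice_facts by blast

lemma q_x_eq_y_iff: "t < 6 \<Longrightarrow> q t x = y \<longleftrightarrow> q t y = x"
  using q_q choice_facts by metis

lemma q_eq_x_imp:
  assumes "t < 6" "u \<in> V" "u \<noteq> y" "q t u = x"
  shows "(u = x0 \<or> u = x1) \<and> q t x = u"
  using assms q_q[of t u] q_x[of t] by auto

lemma q_eq_y_imp:
  assumes "t < 6" "u \<in> V" "u \<noteq> x" "q t u = y"
  shows "(u = y0 \<or> u = y1) \<and> q t y = u"
  using assms q_q[of t u] q_y[of t] by auto

lemma permute: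
  assumes f: "bij_betw f {..<6} {..<6}"
  shows "partner_cover V E x y x0 x1 y0 y1 (\<lambda>t. q (f t))"
proof
  have ft: "t < 6 \<Longrightarrow> f t < 6" for t using f unfolding bij_betw_def by auto
  fix t :: nat and v assume "t < 6" "v \<in> V"
  then show "q (f t) v \<in> V" "q (f t) v \<noteq> v" "q (f t) (q (f t) v) = v" "{v, q (f t) v} \<in> E"
    using q_in q_neq q_q q_edge ft by auto
next
  fix u w assume "{u, w} \<in> E"
  then show "card {t. t < 6 \<and> q (f t) u = w} = 2"
    using card_bij_reindex[OF f, of "\<lambda>t. q t u = w"] card_q_eq by simp
qed (use valid graph x_neighbours y_neighbours in auto)

text \<open>The four matchings avoiding xy split into two pairs each of which uses both remaining edges
  at x and both at y (balanced_pairing).  Ordering a pair therefore fixes the order at x or at y,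
  and in block bL the order at y is forced by the chosen order at x.\<close>
lemma arrangement_exists:
  fixes bN bL bR :: nat
  assumes b: "bN < 3" "bL < 3" "bR < 3" "bN \<noteq> bL" "bN \<noteq> bR" "bL \<noteq> bR"
  shows "\<exists>f. bij_betw f {..<6} {..<6} \<and> (\<forall>s<6. q (f s) x = y \<longleftrightarrow> s div 2 = bN) \<and>
     (\<forall>s<6. s div 2 = bL \<longrightarrow> (q (f s) x = x1 \<longleftrightarrow> cL = even s) \<and>
          (q (f s) y = y1 \<longleftrightarrow> (q (f (2*bL)) y = y1) = even s)) \<and>
     (\<forall>s<6. s div 2 = bR \<longrightarrow> (q (f s) y = y1 \<longleftrightarrow> cR = even s))"
proof -
  define Z where "Z = {t. t < 6 \<and> q t x = y}"
  define W where "W = {t. t < 6 \<and> q t x \<noteq> y}"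
  have cZ: "card Z = 2" using card_q_eq choice_edges unfolding Z_def by blast
  then obtain z1 z2 where Zz: "Z = {z1, z2}" "z1 \<noteq> z2" by (meson card_2_iff)
  have cW: "card W = 4"
    using card_filter_add_compl[of 6 "\<lambda>t. q t x = y"] cZ unfolding Z_def W_def by simp
  have "{t \<in> W. q t x = x1} = {t. t < 6 \<and> q t x = x1}"
    unfolding W_def using choice_facts by auto
  then have cx1: "card {t \<in> W. q t x = x1} = 2" using card_q_eq choice_edges by metis
  have "{t \<in> W. q t y = y1} = {t. t < 6 \<and> q t y = y1}"
    unfolding W_def using choice_facts q_x_eq_y_iff by auto
  then have cy1: "card {t \<in> W. q t y = y1} = 2" using card_q_eq choice_edges by metis
  obtain p1 p2 p3 p4 where P: "W = {p1,p2,p3,p4}" "distinct [p1,p2,p3,p4]"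
     "(q p1 x = x1) \<noteq> (q p2 x = x1)" "(q p1 y = y1) \<noteq> (q p2 y = y1)"
     "(q p3 x = x1) \<noteq> (q p4 x = x1)" "(q p3 y = y1) \<noteq> (q p4 y = y1)"
    by (rule balanced_pairing[OF cW cx1 cy1])
  define l1 where "l1 = (if (q p1 x = x1) = cL then p1 else p2)"
  define l2 where "l2 = (if (q p1 x = x1) = cL then p2 else p1)"
  define r1 where "r1 = (if (q p3 y = y1) = cR then p3 else p4)"
  define r2 where "r2 = (if (q p3 y = y1) = cR then p4 else p3)"
  have L: "(q l1 x = x1) = cL" "(q l2 x = x1) = (\<not> cL)" "(q l2 y = y1) = (\<not> (q l1 y = y1))"
    unfolding l1_def l2_def using P by auto
  have R: "(q r1 y = y1) = cR" "(q r2 y = y1) = (\<not> cR)"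
    unfolding r1_def r2_def using P by auto
  have all6: "{z1,z2,l1,l2,r1,r2} = {..<6}"
  proof -
    have "{..<6} = Z \<union> W" unfolding Z_def W_def by auto
    also have "\<dots> = {z1,z2,l1,l2,r1,r2}" unfolding Zz(1) P(1) l1_def l2_def r1_def r2_def
      by auto
    finally show ?thesis by simp
  qed
  have inW: "l1 \<in> W" "l2 \<in> W" "r1 \<in> W" "r2 \<in> W" "z1 \<in> Z" "z2 \<in> Z"
    using P Zz unfolding l1_def l2_def r1_def r2_def by auto
  define f where "f s = (if s div 2 = bN then (if even s then z1 else z2)
      else if s div 2 = bL then (if even s then l1 else l2) else (if even s then r1 else r2))"
    for s :: nat
  have blocks: "s div 2 = bN \<or> s div 2 = bL \<or> s div 2 = bR" if "s < 6" for s :: nat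
  proof -
    have "s div 2 < 3" using that by simp
    then show ?thesis using b by linarith
  qed
  have "f ` {..<6} = {..<6}"
  proof
    show "f ` {..<6} \<subseteq> {..<6}" using all6 unfolding f_def by auto
    have "z1 = f (2*bN)" "z2 = f (2*bN+1)" "l1 = f (2*bL)" "l2 = f (2*bL+1)"
      "r1 = f (2*bR)" "r2 = f (2*bR+1)"
      unfolding f_def using b by auto
    moreover have "2*bN < 6" "2*bN+1 < (6::nat)" "2*bL < 6" "2*bL+1 < (6::nat)"
      "2*bR < 6" "2*bR+1 < (6::nat)"
      using b by auto
    ultimately have "{z1,z2,l1,l2,r1,r2} \<subseteq> f ` {..<6}"
      by (metis (no_types, lifting) empty_subsetI image_eqI insert_subset lessThan_iff)
    then show "{..<6} \<subseteq> f ` {..<6}" using all6 by simp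
  qed
  then have "bij_betw f {..<6} {..<6}"
    unfolding bij_betw_def using eq_card_imp_inj_on[of "{..<6::nat}" f] by simp
  moreover have "\<forall>s<6. q (f s) x = y \<longleftrightarrow> s div 2 = bN"
    using blocks inW b unfolding f_def Z_def W_def by auto
  moreover have "f (2*bL) = l1" unfolding f_def using b by auto
  then have "\<forall>s<6. s div 2 = bL \<longrightarrow> (q (f s) x = x1 \<longleftrightarrow> cL = even s) \<and>
          (q (f s) y = y1 \<longleftrightarrow> (q (f (2*bL)) y = y1) = even s)"
    using L b unfolding f_def by auto
  moreover have "\<forall>s<6. s div 2 = bR \<longrightarrow> (q (f s) y = y1 \<longleftrightarrow> cR = even s)"
    using R b unfolding f_def by auto
  ultimately show ?thesis by blast
qed

end

lemma partner_cover_of_fulkerson_cover: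
  assumes cub: "cubic V E" and vc: "valid_choice V E x y x0 x1 y0 y1"
    and "has_fulkerson_cover V E"
  obtains q where "partner_cover V E x y x0 x1 y0 y1 q"
proof -
  obtain M where M: "\<And>t. t < (6::nat) \<Longrightarrow> perfect_matching V E (M t)"
    and cM: "\<And>e. e \<in> E \<Longrightarrow> card {t. t < 6 \<and> e \<in> M t} = 2"
    using assms(3) unfolding has_fulkerson_cover_def by blast
  have g: "graph V E" using cub unfolding cubic_def by simp
  have v: "{x, y} \<in> E" "{x, x0} \<in> E" "{x, x1} \<in> E" "x0 \<noteq> x1" "x0 \<noteq> y" "x1 \<noteq> y"
    "{y, y0} \<in> E" "{y, y1} \<in> E" "y0 \<noteq> y1" "y0 \<noteq> x" "y1 \<noteq> x"
    using vc unfolding valid_choice_def by auto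
  have "partner_cover V E x y x0 x1 y0 y1 (\<lambda>t. mate (M t))"
  proof
    fix w assume "{x, w} \<in> E"
    then show "w \<in> {y, x0, x1}"
      using cubic_neighbour_in[OF cub _ v(1-3)] graph_edge_endpoints[OF g v(1)] v by auto
  next
    fix w assume "{y, w} \<in> E"
    then show "w \<in> {x, y0, y1}"
      using cubic_neighbour_in[OF cub _ _ v(7,8)] graph_edge_endpoints[OF g v(1)] v
      by (auto simp: insert_commute)
  next
    fix t :: nat and u assume t: "t < 6" and u: "u \<in> V"
    show "mate (M t) u \<in> V" "mate (M t) u \<noteq> u" "mate (M t) (mate (M t) u) = u"
      using mate_props[OF g M[OF t] u] by auto
    show "{u, mate (M t) u} \<in> E"
      using mate_props(1)[OF g M[OF t] u] M[OF t] unfolding perfect_matching_def by auto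
  next
    fix u w assume e: "{u, w} \<in> E"
    then have "{t. t < 6 \<and> mate (M t) u = w} = {t. t < 6 \<and> {u, w} \<in> M t}"
      using mate_props(5)[OF g M] graph_edge_endpoints[OF g e] by auto
    then show "card {t. t < 6 \<and> mate (M t) u = w} = 2" using cM[OF e] by simp
  qed (use vc g in auto)
  then show ?thesis by (rule that)
qed

definition cyc_pred :: "nat \<Rightarrow> nat \<Rightarrow> nat" where
  "cyc_pred k j = (j + k - 1) mod k"

lemma cyc_pred_facts:
  assumes "j < k" "3 \<le> k"
  shows "cyc_pred k j = (if j = 0 then k - 1 else j - 1)" "cyc_pred k j < k" "cyc_pred k j \<noteq> j"
    "(cyc_pred k j + 1) mod k = j" "(j + 1) mod k < k" "(j + 1) mod k \<noteq> j"
    "cyc_pred k ((j + 1) mod k) = j"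
proof -
  show p: "cyc_pred k j = (if j = 0 then k - 1 else j - 1)"
  proof (cases j)
    case (Suc i)
    then have "cyc_pred k j = (i + k) mod k" unfolding cyc_pred_def by simp
    then show ?thesis using assms Suc by simp
  qed (use assms in \<open>simp add: cyc_pred_def\<close>)
  have n: "(j + 1) mod k = (if j + 1 = k then 0 else j + 1)" using assms by simp
  show "cyc_pred k j < k" "cyc_pred k j \<noteq> j" "(cyc_pred k j + 1) mod k = j"
    "(j + 1) mod k < k" "(j + 1) mod k \<noteq> j"
    using p n assms by auto
  show "cyc_pred k ((j + 1) mod k) = j" using n assms by (auto simp: cyc_pred_def)
qed

text \<open>Matching s of the glued graph belongs to block s div 2.  The two matchings of G_j
  containing x_j y_j are placed in block xy_block j; at the junction between G_j and G_(j + 1)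
  the vertex c_j is matched into the tree T of the c's and v's exactly in block free_block j,
  the block avoided by both xy-blocks.  For odd k these choices are consistent around the cycle.\<close>
definition xy_block :: "nat \<Rightarrow> nat" where
  "xy_block j = (if j = 0 then 1 else if j = 1 then 2 else if even j then 0 else 1)"

definition free_block :: "nat \<Rightarrow> nat" where
  "free_block j = (if j = 0 then 0 else if j = 1 then 1 else 2)"

lemma xy_block_less: "xy_block j < 3"
  unfolding xy_block_def by auto

lemma free_block_less: "free_block j < 3"
  unfolding free_block_def by auto

lemma xy_block_succ:
  assumes k: "odd k" "3 \<le> k" and j: "j < k"
  shows "xy_block j \<noteq> xy_block ((j + 1) mod k)"
    and "c < 3 \<Longrightarrow> c \<noteq> xy_block j \<and> c \<noteq> xy_block ((j + 1) mod k) \<longleftrightarrow> c = free_block j"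
proof -
  have n: "(j + 1) mod k = (if j + 1 = k then 0 else j + 1)" using j by simp
  consider "j = 0" | "j = 1" | "j \<ge> 2" "j + 1 = k" | "j \<ge> 2" "j + 1 \<noteq> k" by linarith
  then have "xy_block j \<noteq> xy_block ((j + 1) mod k) \<and>
    (\<forall>c<3. c \<noteq> xy_block j \<and> c \<noteq> xy_block ((j + 1) mod k) \<longleftrightarrow> c = free_block j)"
  proof cases
    case 3
    then have "even j" using k by presburger
    then show ?thesis using 3 n unfolding free_block_def xy_block_def by auto
  next
    case 4
    then have "xy_block ((j + 1) mod k) = (if even j then 1 else 0)"
      "xy_block j = (if even j then 0 else 1)"
      using n unfolding xy_block_def by auto
    then show ?thesis using 4 unfolding free_block_def by auto
  qed (use k n in \<open>auto simp: free_block_def xy_block_def\<close>)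
  then show "xy_block j \<noteq> xy_block ((j + 1) mod k)"
    and "c < 3 \<Longrightarrow> c \<noteq> xy_block j \<and> c \<noteq> xy_block ((j + 1) mod k) \<longleftrightarrow> c = free_block j"
    by auto
qed

lemma xy_block_neq_free_block_pred:
  assumes "odd k" "3 \<le> k" "j < k"
  shows "xy_block j \<noteq> free_block (cyc_pred k j)"
proof -
  have "j = 0 \<or> j = 1 \<or> j = 2 \<or> 3 \<le> j" by linarith
  then show ?thesis
    using assms cyc_pred_facts(1)[OF assms(3,2)] unfolding xy_block_def free_block_def by auto
qed

lemma free_block_small:
  assumes "3 \<le> k" "j < k" "j \<le> 2"
  shows "free_block j = 3 - xy_block j - free_block (cyc_pred k j)"
proof -
  have "j = 0 \<or> j = 1 \<or> j = 2" using assms(3) by linarith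
  then show ?thesis
    using assms cyc_pred_facts(1)[OF assms(2,1)] unfolding xy_block_def free_block_def by auto
qed

lemma free_block_large:
  assumes "3 \<le> k" "j < k" "3 \<le> j"
  shows "free_block j = 2" "free_block (cyc_pred k j) = 2"
  using assms cyc_pred_facts(1)[OF assms(2,1)] unfolding free_block_def by auto

definition spine :: "nat \<Rightarrow> 'a mvert list" where
  "spine k = [VC 1] @ map VV [0..<k - 2] @ [VC 0]"

definition tree_edges :: "nat \<Rightarrow> 'a mvert set set" where
  "tree_edges k = {{VC 1, VV 0}, {VV (k - 3), VC 0}} \<union> {{VV m, VV (Suc m)} | m. Suc m < k - 2}
     \<union> {{VC i, VV (i - 2)} | i. 2 \<le> i \<and> i < k}"

text \<open>In block b the tree is matched perfectly apart from the c_j with free_block j \<noteq> b.  The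
  path v_0 ... v_(k-3) has an odd number of vertices; block 0 matches its last vertex to c_0,
  block 1 its first vertex to c_1, and both pair up the remaining vertices along the path.\<close>
definition tree_mate :: "nat \<Rightarrow> nat \<Rightarrow> 'a mvert \<Rightarrow> 'a mvert" where
  "tree_mate k s v = (case v of
     VV m \<Rightarrow>
       (if s div 2 = 0 then (if m = k - 3 then VC 0 else if even m then VV (m + 1) else VV (m - 1))
        else if s div 2 = 1 then (if m = 0 then VC 1 else if odd m then VV (m + 1) else VV (m - 1))
        else VC (m + 2))
   | VC j \<Rightarrow> (if s div 2 = 0 then VV (k - 3) else if s div 2 = 1 then VV 0 else VV (j - 2))
   | _ \<Rightarrow> v)"

lemma path_edges_nth: "path_edges xs = {{xs ! i, xs ! Suc i} | i. Suc i < length xs}"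
proof -
  have "path_edges xs = (\<lambda>(a, b). {a, b}) ` set (zip xs (tl xs))"
    unfolding path_edges_def by simp
  also have "set (zip xs (tl xs)) = {(xs ! i, xs ! Suc i) | i. Suc i < length xs}"
    by (auto simp: set_zip nth_tl)
  finally show ?thesis by auto
qed

lemma spine_nth:
  assumes "3 \<le> k" "i < k"
  shows "spine k ! i = (if i = 0 then VC 1 else if i \<le> k - 2 then VV (i - 1) else VC 0)"
  using assms by (auto simp: spine_def nth_append)

lemma path_edges_spine:
  assumes k: "3 \<le> k"
  shows "path_edges (spine k :: 'a mvert list) =
    {{VC 1, VV 0}, {VV (k - 3), VC 0}} \<union> {{VV m, VV (Suc m)} | m. Suc m < k - 2}"
proof -
  have len: "length (spine k :: 'a mvert list) = k" using k by (simp add: spine_def)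
  have "path_edges (spine k :: 'a mvert list) = {{spine k ! i, spine k ! Suc i} | i. Suc i < k}"
    unfolding path_edges_nth len ..
  also have "\<dots> = {if i = 0 then {VC 1, VV 0} else if i \<le> k - 3 then {VV (i - 1), VV i}
      else {VV (k - 3), VC 0} | i. Suc i < k}"
    using k by (intro Collect_cong ex_cong1) (auto simp: spine_nth)
  also have "\<dots> = {{VC 1, VV 0}, {VV (k - 3), VC 0}} \<union> {{VV m, VV (Suc m)} | m. Suc m < k - 2}"
  proof (intro equalityI subsetI)
    fix e assume "e \<in> {if i = 0 then {VC 1, VV 0} else if i \<le> k - 3 then {VV (i - 1), VV i}
      else {VV (k - 3), VC 0} | i. Suc i < k}"
    then show "e \<in> {{VC 1, VV 0}, {VV (k - 3), VC 0}} \<union> {{VV m, VV (Suc m)} | m. Suc m < k - 2}"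
      by (auto split: if_splits intro!: exI[of _ "_ - 1"])
  next
    fix e assume "e \<in> {{VC 1, VV 0}, {VV (k - 3), VC 0}} \<union> {{VV m, VV (Suc m)} | m. Suc m < k - 2}"
    then consider "e = {VC 1, VV 0}" | "e = {VV (k - 3), VC 0}"
      | m where "e = {VV m, VV (Suc m)}" "Suc m < k - 2"
      by blast
    then show "e \<in> {if i = 0 then {VC 1, VV 0} else if i \<le> k - 3 then {VV (i - 1), VV i}
      else {VV (k - 3), VC 0} | i. Suc i < k}"
    proof cases
      case 1 then show ?thesis using k by (auto intro!: exI[of _ 0])
    next
      case 2 then show ?thesis using k by (auto intro!: exI[of _ "k - 2"])
    next
      case 3 then show ?thesis by (auto intro!: exI[of _ "Suc m"])
    qed
  qed
  finally show ?thesis .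
qed

lemma M_edges_eq:
  assumes "3 \<le> k"
  shows "M_edges k E x y x0 x1 y0 y1 =
     {{Old i u, Old i w} | i u w. i < k \<and> {u, w} \<in> E i \<and> u \<notin> {x i, y i} \<and> w \<notin> {x i, y i}}
     \<union> (\<Union>j<k. {{VA j, Old j (y0 j)},
                 {VA j, Old ((j + 1) mod k) (x0 ((j + 1) mod k))},
                 {VB j, Old j (y1 j)},
                 {VB j, Old ((j + 1) mod k) (x1 ((j + 1) mod k))},
                 {VA j, VC j}, {VB j, VC j}})
     \<union> tree_edges k"
  unfolding M_edges_def spine_def[symmetric] path_edges_spine[OF assms] tree_edges_def by blast

lemma tree_mate_VV:
  fixes m s :: nat
  assumes k: "odd k" "3 \<le> k" and m: "m < k - 2" and s: "s < 6"
  defines "w \<equiv> tree_mate k s (VV m) :: 'a mvert"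
  shows "(\<exists>m'. w = VV m' \<and> m' < k - 2 \<and> m' \<noteq> m \<and> tree_mate k s w = VV m
            \<and> {VV m, w} \<in> tree_edges k)
    \<or> (\<exists>j. w = VC j \<and> j < k \<and> s div 2 = free_block j \<and> tree_mate k s w = VV m
            \<and> {VV m, w} \<in> tree_edges k)"
proof -
  have sd: "s div 2 = 0 \<or> s div 2 = 1 \<or> s div 2 = 2" using s by linarith
  have ek: "even (k - 3)" using k by simp
  consider "s div 2 = 0" "m = k - 3" | "s div 2 = 0" "m \<noteq> k - 3" "even m"
    | "s div 2 = 0" "m \<noteq> k - 3" "odd m" | "s div 2 = 1" "m = 0" | "s div 2 = 1" "m \<noteq> 0" "odd m"
    | "s div 2 = 1" "m \<noteq> 0" "even m" | "s div 2 = 2"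
    using sd by fastforce
  then show ?thesis
  proof cases
    case 1
    have "w = VC 0" "tree_mate k s (VC 0) = (VV m :: 'a mvert)" "s div 2 = free_block 0"
      using 1 by (simp_all add: w_def tree_mate_def free_block_def)
    moreover have "{VV m, VC 0} \<in> (tree_edges k :: 'a mvert set set)"
      using 1 unfolding tree_edges_def by simp
    ultimately show ?thesis using k by (intro disjI2 exI[of _ 0]) simp
  next
    case 2
    then have h: "Suc m < k - 2" "m + 1 \<noteq> k - 3" using m ek by (auto, presburger)
    have "w = VV (m + 1)" "tree_mate k s (VV (m + 1)) = (VV m :: 'a mvert)"
      using 2 h by (simp_all add: w_def tree_mate_def)
    moreover have "{VV m, VV (m + 1)} \<in> (tree_edges k :: 'a mvert set set)"
      using h unfolding tree_edges_def by auto
    ultimately show ?thesis using h by (intro disjI1 exI[of _ "m + 1"]) simp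
  next
    case 3
    then have h: "m \<ge> 1" "m - 1 \<noteq> k - 3" "even (m - 1)" using m by (auto, presburger+)
    have "w = VV (m - 1)" "tree_mate k s (VV (m - 1)) = (VV m :: 'a mvert)"
      using 3 h by (simp_all add: w_def tree_mate_def)
    moreover have "{VV (m - 1), VV m} \<in> (tree_edges k :: 'a mvert set set)"
      using h m unfolding tree_edges_def by (intro UnI1 UnI2 CollectI exI[of _ "m - 1"]) simp
    moreover have "m - 1 < k - 2" "m - 1 \<noteq> m" using h m by auto
    ultimately show ?thesis by (intro disjI1 exI[of _ "m - 1"]) (simp add: insert_commute)
  next
    case 4
    have "w = VC 1" "tree_mate k s (VC 1) = (VV m :: 'a mvert)" "s div 2 = free_block 1"
      using 4 by (simp_all add: w_def tree_mate_def free_block_def)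
    moreover have "{VV m, VC 1} \<in> (tree_edges k :: 'a mvert set set)"
      using 4 unfolding tree_edges_def by (simp add: insert_commute)
    ultimately show ?thesis using k by (intro disjI2 exI[of _ 1]) simp
  next
    case 5
    then have h: "Suc m < k - 2" using m ek by presburger
    have "w = VV (m + 1)" "tree_mate k s (VV (m + 1)) = (VV m :: 'a mvert)"
      using 5 h by (simp_all add: w_def tree_mate_def)
    moreover have "{VV m, VV (m + 1)} \<in> (tree_edges k :: 'a mvert set set)"
      using h unfolding tree_edges_def by auto
    ultimately show ?thesis using h by (intro disjI1 exI[of _ "m + 1"]) simp
  next
    case 6
    then have h: "m \<ge> 1" "odd (m - 1)" using m by (simp, presburger)
    have "w = VV (m - 1)" "tree_mate k s (VV (m - 1)) = (VV m :: 'a mvert)"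
      using 6 h by (auto simp add: w_def tree_mate_def)
    moreover have "{VV (m - 1), VV m} \<in> (tree_edges k :: 'a mvert set set)"
      using h m unfolding tree_edges_def by (intro UnI1 UnI2 CollectI exI[of _ "m - 1"]) simp
    moreover have "m - 1 < k - 2" "m - 1 \<noteq> m" using h m by auto
    ultimately show ?thesis by (intro disjI1 exI[of _ "m - 1"]) (simp add: insert_commute)
  next
    case 7
    have "w = VC (m + 2)" "tree_mate k s (VC (m + 2)) = (VV m :: 'a mvert)"
      "s div 2 = free_block (m + 2)"
      using 7 by (simp_all add: w_def tree_mate_def free_block_def)
    moreover have "{VV m, VC (m + 2)} \<in> (tree_edges k :: 'a mvert set set)"
      using m unfolding tree_edges_def by (intro UnI2 CollectI exI[of _ "m + 2"])
        (simp add: insert_commute)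
    ultimately show ?thesis using m by (intro disjI2 exI[of _ "m + 2"]) simp
  qed
qed

lemma tree_mate_VC:
  fixes j s :: nat
  assumes k: "3 \<le> k" and j: "j < k" and s: "s < 6" and free: "s div 2 = free_block j"
  defines "w \<equiv> tree_mate k s (VC j) :: 'a mvert"
  shows "\<exists>m. w = VV m \<and> m < k - 2 \<and> tree_mate k s w = VC j \<and> {VC j, w} \<in> tree_edges k"
proof -
  consider "j = 0" | "j = 1" | "j \<ge> 2" by linarith
  then show ?thesis
  proof cases
    case 1
    have "w = VV (k - 3)" "tree_mate k s (VV (k - 3)) = (VC j :: 'a mvert)"
      using 1 free by (simp_all add: w_def tree_mate_def free_block_def)
    moreover have "{VC j, VV (k - 3)} \<in> (tree_edges k :: 'a mvert set set)"
      using 1 unfolding tree_edges_def by (simp add: insert_commute)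
    ultimately show ?thesis using k by (intro exI[of _ "k - 3"]) simp
  next
    case 2
    have "w = VV 0" "tree_mate k s (VV 0) = (VC j :: 'a mvert)"
      using 2 free by (simp_all add: w_def tree_mate_def free_block_def)
    moreover have "{VC j, VV 0} \<in> (tree_edges k :: 'a mvert set set)"
      using 2 unfolding tree_edges_def by simp
    ultimately show ?thesis using k by (intro exI[of _ 0]) simp
  next
    case 3
    have "w = VV (j - 2)" "tree_mate k s (VV (j - 2)) = (VC j :: 'a mvert)"
      using 3 free by (simp_all add: w_def tree_mate_def free_block_def)
    moreover have "{VC j, VV (j - 2)} \<in> (tree_edges k :: 'a mvert set set)"
      using 3 j unfolding tree_edges_def by auto
    ultimately show ?thesis using j 3 by (intro exI[of _ "j - 2"]) simp
  qed
qed

locale junction_cover =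
  fixes k :: nat and V :: "nat \<Rightarrow> 'a set" and E :: "nat \<Rightarrow> 'a set set"
    and x y x0 x1 y0 y1 :: "nat \<Rightarrow> 'a" and Q :: "nat \<Rightarrow> nat \<Rightarrow> 'a \<Rightarrow> 'a"
  assumes k_odd: "odd k" and k_ge_3: "3 \<le> k"
    and partner: "\<And>j. j < k \<Longrightarrow>
      partner_cover (V j) (E j) (x j) (y j) (x0 j) (x1 j) (y0 j) (y1 j) (Q j)"
    and no_xy_both: "\<And>j s. j < k \<Longrightarrow> s < 6 \<Longrightarrow>
      \<not> (Q j s (y j) = x j \<and> Q ((j + 1) mod k) s (x ((j + 1) mod k)) = y ((j + 1) mod k))"
    and no_0_both: "\<And>j s. j < k \<Longrightarrow> s < 6 \<Longrightarrow>
      \<not> (Q j s (y j) = y0 j \<and> Q ((j + 1) mod k) s (x ((j + 1) mod k)) = x0 ((j + 1) mod k))"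
    and no_1_both: "\<And>j s. j < k \<Longrightarrow> s < 6 \<Longrightarrow>
      \<not> (Q j s (y j) = y1 j \<and> Q ((j + 1) mod k) s (x ((j + 1) mod k)) = x1 ((j + 1) mod k))"
    and free_block_iff: "\<And>j s. j < k \<Longrightarrow> s < 6 \<Longrightarrow>
      Q j s (y j) \<noteq> x j \<and> Q ((j + 1) mod k) s (x ((j + 1) mod k)) \<noteq> y ((j + 1) mod k)
      \<longleftrightarrow> s div 2 = free_block j"
begin

abbreviation "V' \<equiv> M_vertices k V x y"
abbreviation "E' \<equiv> M_edges k E x y x0 x1 y0 y1"

definition a_to_c :: "nat \<Rightarrow> nat \<Rightarrow> bool" where
  "a_to_c j s \<longleftrightarrow>
    Q j s (y j) \<noteq> y0 j \<and> Q ((j + 1) mod k) s (x ((j + 1) mod k)) \<noteq> x0 ((j + 1) mod k)"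

definition b_to_c :: "nat \<Rightarrow> nat \<Rightarrow> bool" where
  "b_to_c j s \<longleftrightarrow>
    Q j s (y j) \<noteq> y1 j \<and> Q ((j + 1) mod k) s (x ((j + 1) mod k)) \<noteq> x1 ((j + 1) mod k)"

text \<open>The mate function of the s-th matching of the glued graph: inside H_j follow Q j s, an
  edge of G_j to x_j or y_j is replaced by the corresponding edge to a gadget vertex a or b,
  a gadget vertex not matched into an H is matched to c, and a c not matched to its a or b is
  matched inside the tree.\<close>
fun glue :: "nat \<Rightarrow> 'a mvert \<Rightarrow> 'a mvert" where
  "glue s (Old j u) =
    (if Q j s u = x j then (if u = x0 j then VA (cyc_pred k j) else VB (cyc_pred k j))
     else if Q j s u = y j then (if u = y0 j then VA j else VB j)
     else Old j (Q j s u))"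
| "glue s (VA j) =
    (if Q j s (y j) = y0 j then Old j (y0 j)
     else if Q ((j + 1) mod k) s (x ((j + 1) mod k)) = x0 ((j + 1) mod k)
     then Old ((j + 1) mod k) (x0 ((j + 1) mod k))
     else VC j)"
| "glue s (VB j) =
    (if Q j s (y j) = y1 j then Old j (y1 j)
     else if Q ((j + 1) mod k) s (x ((j + 1) mod k)) = x1 ((j + 1) mod k)
     then Old ((j + 1) mod k) (x1 ((j + 1) mod k))
     else VC j)"
| "glue s (VC j) = (if a_to_c j s then VA j else if b_to_c j s then VB j else tree_mate k s (VC j))"
| "glue s (VV m) = tree_mate k s (VV m)"

lemma mem_M_vertices:
  "Old i u \<in> V' \<longleftrightarrow> i < k \<and> u \<in> V i \<and> u \<noteq> x i \<and> u \<noteq> y i"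
  "VA j \<in> V' \<longleftrightarrow> j < k" "VB j \<in> V' \<longleftrightarrow> j < k" "VC j \<in> V' \<longleftrightarrow> j < k"
  "VV m \<in> V' \<longleftrightarrow> m < k - 2"
  unfolding M_vertices_def by auto

lemma M_edges_intros:
  "i < k \<Longrightarrow> {u, w} \<in> E i \<Longrightarrow> u \<notin> {x i, y i} \<Longrightarrow> w \<notin> {x i, y i} \<Longrightarrow> {Old i u, Old i w} \<in> E'"
  "j < k \<Longrightarrow> {VA j, Old j (y0 j)} \<in> E'"
  "j < k \<Longrightarrow> {VA j, Old ((j + 1) mod k) (x0 ((j + 1) mod k))} \<in> E'"
  "j < k \<Longrightarrow> {VB j, Old j (y1 j)} \<in> E'"
  "j < k \<Longrightarrow> {VB j, Old ((j + 1) mod k) (x1 ((j + 1) mod k))} \<in> E'"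
  "j < k \<Longrightarrow> {VA j, VC j} \<in> E'"
  "j < k \<Longrightarrow> {VB j, VC j} \<in> E'"
  "e \<in> tree_edges k \<Longrightarrow> e \<in> E'"
  unfolding M_edges_eq[OF k_ge_3] by blast+

lemma M_edges_cases:
  assumes "e \<in> E'"
  obtains (Old) i u w where "e = {Old i u, Old i w}" "i < k" "{u, w} \<in> E i"
      "u \<notin> {x i, y i}" "w \<notin> {x i, y i}"
    | (gadget) j where "j < k"
      "e = {VA j, Old j (y0 j)} \<or> e = {VA j, Old ((j + 1) mod k) (x0 ((j + 1) mod k))}
        \<or> e = {VB j, Old j (y1 j)} \<or> e = {VB j, Old ((j + 1) mod k) (x1 ((j + 1) mod k))}
        \<or> e = {VA j, VC j} \<or> e = {VB j, VC j}"
    | (tree) "e \<in> tree_edges k"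
  using assms unfolding M_edges_eq[OF k_ge_3] by blast

lemma c_free:
  assumes j: "j < k" and s: "s < 6"
  shows "\<not> a_to_c j s \<and> \<not> b_to_c j s \<longleftrightarrow> s div 2 = free_block j" "\<not> (a_to_c j s \<and> b_to_c j s)"
proof -
  define j' where "j' = (j + 1) mod k"
  have j': "j' < k" unfolding j'_def using cyc_pred_facts(5)[OF j k_ge_3] .
  define a where "a = Q j s (y j)"
  define b where "b = Q j' s (x j')"
  have ab: "a \<in> {x j, y0 j, y1 j}" "b \<in> {y j', x0 j', x1 j'}"
    unfolding a_def b_def using partner_cover.q_y[OF partner[OF j] s]
      partner_cover.q_x[OF partner[OF j'] s]
    by auto
  note b1 = partner_cover.choice_facts[OF partner[OF j]]
    and b2 = partner_cover.choice_facts[OF partner[OF j']]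
  have c1: "\<not> (a = x j \<and> b = y j')" and c2a: "\<not> (a = y0 j \<and> b = x0 j')"
    and c2b: "\<not> (a = y1 j \<and> b = x1 j')"
    and c3: "a \<noteq> x j \<and> b \<noteq> y j' \<longleftrightarrow> s div 2 = free_block j"
    using no_xy_both[OF j s] no_0_both[OF j s] no_1_both[OF j s] free_block_iff[OF j s]
    unfolding a_def b_def j'_def by auto
  have fa: "a_to_c j s = (a \<noteq> y0 j \<and> b \<noteq> x0 j')" and fb: "b_to_c j s = (a \<noteq> y1 j \<and> b \<noteq> x1 j')"
    unfolding a_to_c_def b_to_c_def a_def b_def j'_def by auto
  have "(\<not> a_to_c j s \<and> \<not> b_to_c j s) = (a \<noteq> x j \<and> b \<noteq> y j')"
    unfolding fa fb using ab c2a c2b b1 b2 by auto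
  then show "\<not> a_to_c j s \<and> \<not> b_to_c j s \<longleftrightarrow> s div 2 = free_block j" using c3 by simp
  show "\<not> (a_to_c j s \<and> b_to_c j s)" unfolding fa fb using ab c1 by auto
qed

lemma glue_Old_to_x:
  assumes v: "Old j u \<in> V'" and s: "s < 6" and q: "Q j s u = x j"
  shows "glue s (Old j u) \<in> V' \<and> glue s (Old j u) \<noteq> Old j u \<and> glue s (glue s (Old j u)) = Old j u
     \<and> {Old j u, glue s (Old j u)} \<in> E'"
proof -
  have j: "j < k" and u: "u \<in> V j" "u \<noteq> x j" "u \<noteq> y j" using v by (auto simp: mem_M_vertices)
  define p where "p = cyc_pred k j"
  have p: "p < k" "(p + 1) mod k = j" using cyc_pred_facts[OF j k_ge_3] unfolding p_def by auto
  have hx: "u = x0 j \<or> u = x1 j" "Q j s (x j) = u"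
    using partner_cover.q_eq_x_imp[OF partner[OF j] s u(1) u(3) q] by auto
  show ?thesis
  proof (cases "u = x0 j")
    case True
    have "Q p s (y p) \<noteq> y0 p" using no_0_both[OF p(1) s] p hx True by auto
    then have "glue s (Old j u) = VA p" "glue s (VA p) = Old j u"
      using q hx True p by (simp_all add: p_def)
    moreover have "{VA p, Old j u} \<in> E'" using M_edges_intros(3)[OF p(1)] p True by simp
    ultimately show ?thesis using p by (simp add: mem_M_vertices insert_commute)
  next
    case False
    then have ux: "u = x1 j" using hx by simp
    have "Q p s (y p) \<noteq> y1 p" using no_1_both[OF p(1) s] p hx ux by auto
    then have "glue s (Old j u) = VB p" "glue s (VB p) = Old j u"
      using q hx False p ux by (simp_all add: p_def)
    moreover have "{VB p, Old j u} \<in> E'" using M_edges_intros(5)[OF p(1)] p ux by simp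
    ultimately show ?thesis using p by (simp add: mem_M_vertices insert_commute)
  qed
qed

lemma glue_Old_to_y:
  assumes v: "Old j u \<in> V'" and s: "s < 6" and q: "Q j s u = y j"
  shows "glue s (Old j u) \<in> V' \<and> glue s (Old j u) \<noteq> Old j u \<and> glue s (glue s (Old j u)) = Old j u
     \<and> {Old j u, glue s (Old j u)} \<in> E'"
proof -
  have j: "j < k" and u: "u \<in> V j" "u \<noteq> x j" "u \<noteq> y j" using v by (auto simp: mem_M_vertices)
  have hy: "u = y0 j \<or> u = y1 j" "Q j s (y j) = u" and "Q j s u \<noteq> x j"
    using partner_cover.q_eq_y_imp[OF partner[OF j] s u(1) u(2) q]
      partner_cover.choice_facts[OF partner[OF j]] q by auto
  then have "glue s (Old j u) = (if u = y0 j then VA j else VB j)"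
    "glue s (if u = y0 j then VA j else VB j) = Old j u"
    using q partner_cover.choice_facts[OF partner[OF j]] by auto
  moreover have "{if u = y0 j then VA j else VB j, Old j u} \<in> E'"
    using M_edges_intros(2,4)[OF j] hy by auto
  ultimately show ?thesis using j by (auto simp: mem_M_vertices insert_commute)
qed

lemma glue_Old:
  assumes v: "Old j u \<in> V'" and s: "s < 6"
  shows "glue s (Old j u) \<in> V' \<and> glue s (Old j u) \<noteq> Old j u \<and> glue s (glue s (Old j u)) = Old j u
     \<and> {Old j u, glue s (Old j u)} \<in> E'"
proof -
  have j: "j < k" and u: "u \<in> V j" "u \<noteq> x j" "u \<noteq> y j" using v by (auto simp: mem_M_vertices)
  consider "Q j s u = x j" | "Q j s u = y j" | "Q j s u \<noteq> x j" "Q j s u \<noteq> y j" by blast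
  then show ?thesis
  proof cases
    case 3
    define w where "w = Q j s u"
    have w: "w \<in> V j" "Q j s w = u" "{u, w} \<in> E j"
      unfolding w_def using partner_cover.q_in[OF partner[OF j] s u(1)]
        partner_cover.q_q[OF partner[OF j] s u(1)] partner_cover.q_edge[OF partner[OF j] s u(1)]
      by auto
    have "glue s (Old j u) = Old j w" "glue s (Old j w) = Old j u"
      using 3 u w(2) unfolding w_def by auto
    moreover have "{Old j u, Old j w} \<in> E'" using M_edges_intros(1)[OF j w(3)] u 3 unfolding w_def
      by simp
    ultimately show ?thesis using j w 3 u partner_cover.q_neq[OF partner[OF j] s u(1)]
      unfolding w_def by (simp add: mem_M_vertices)
  qed (use glue_Old_to_x glue_Old_to_y assms in blast)+
qed

lemma glue_VA:
  assumes j: "j < k" and s: "s < 6"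
  shows "glue s (VA j) \<in> V' \<and> glue s (VA j) \<noteq> VA j \<and> glue s (glue s (VA j)) = VA j
    \<and> {VA j, glue s (VA j)} \<in> E'"
proof -
  define j' where "j' = (j + 1) mod k"
  have j': "j' < k" "cyc_pred k j' = j" "j' \<noteq> j" using cyc_pred_facts[OF j k_ge_3]
    unfolding j'_def by auto
  note b = partner_cover.choice_facts[OF partner[OF j]]
    and b' = partner_cover.choice_facts[OF partner[OF j'(1)]]
  consider (A) "Q j s (y j) = y0 j" | (B) "Q j s (y j) \<noteq> y0 j" "Q j' s (x j') = x0 j'"
    | (C) "Q j s (y j) \<noteq> y0 j" "Q j' s (x j') \<noteq> x0 j'" by blast
  then show ?thesis
  proof cases
    case A
    have q: "Q j s (y0 j) = y j" using partner_cover.q_q[OF partner[OF j] s b(2)] A by simp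
    have P1: "glue s (VA j) = Old j (y0 j)" using A by simp
    have P2: "glue s (Old j (y0 j)) = VA j" using q b by simp
    show ?thesis using P1 P2 M_edges_intros(2)[OF j] j b by (simp add: mem_M_vertices)
  next
    case B
    have q: "Q j' s (x0 j') = x j'" using partner_cover.q_q[OF partner[OF j'(1)] s b'(1)] B by simp
    have P1: "glue s (VA j) = Old j' (x0 j')" using B unfolding j'_def by simp
    have P2: "glue s (Old j' (x0 j')) = VA j" using q j' by simp
    show ?thesis using P1 P2 M_edges_intros(3)[OF j] j'(1) b' unfolding j'_def[symmetric]
      by (simp add: mem_M_vertices)
  next
    case C
    have f: "a_to_c j s" unfolding a_to_c_def j'_def[symmetric] using C by simp
    have P1: "glue s (VA j) = VC j" using C unfolding j'_def by simp
    have P2: "glue s (VC j) = VA j" using f by simp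
    show ?thesis using P1 P2 M_edges_intros(6)[OF j] j by (simp add: mem_M_vertices)
  qed
qed

lemma glue_VB:
  assumes j: "j < k" and s: "s < 6"
  shows "glue s (VB j) \<in> V' \<and> glue s (VB j) \<noteq> VB j \<and> glue s (glue s (VB j)) = VB j
    \<and> {VB j, glue s (VB j)} \<in> E'"
proof -
  define j' where "j' = (j + 1) mod k"
  have j': "j' < k" "cyc_pred k j' = j" "j' \<noteq> j" using cyc_pred_facts[OF j k_ge_3]
    unfolding j'_def by auto
  note b = partner_cover.choice_facts[OF partner[OF j]]
    and b' = partner_cover.choice_facts[OF partner[OF j'(1)]]
  consider (A) "Q j s (y j) = y1 j" | (B) "Q j s (y j) \<noteq> y1 j" "Q j' s (x j') = x1 j'"
    | (C) "Q j s (y j) \<noteq> y1 j" "Q j' s (x j') \<noteq> x1 j'" by blast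
  then show ?thesis
  proof cases
    case A
    have q: "Q j s (y1 j) = y j" using partner_cover.q_q[OF partner[OF j] s b(2)] A by simp
    have P1: "glue s (VB j) = Old j (y1 j)" using A by simp
    have P2: "glue s (Old j (y1 j)) = VB j" using q b by simp
    show ?thesis using P1 P2 M_edges_intros(4)[OF j] j b by (simp add: mem_M_vertices)
  next
    case B
    have q: "Q j' s (x1 j') = x j'" using partner_cover.q_q[OF partner[OF j'(1)] s b'(1)] B by simp
    have P1: "glue s (VB j) = Old j' (x1 j')" using B unfolding j'_def by simp
    have P2: "glue s (Old j' (x1 j')) = VB j" using q j' b' by simp
    show ?thesis using P1 P2 M_edges_intros(5)[OF j] j'(1) b' unfolding j'_def[symmetric]
      by (simp add: mem_M_vertices)
  next
    case C
    have f: "b_to_c j s" unfolding b_to_c_def j'_def[symmetric] using C by simp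
    have nf: "\<not> a_to_c j s" using c_free(2)[OF j s] f by blast
    have P1: "glue s (VB j) = VC j" using C unfolding j'_def by simp
    have P2: "glue s (VC j) = VB j" using f nf by simp
    show ?thesis using P1 P2 M_edges_intros(7)[OF j] j by (simp add: mem_M_vertices)
  qed
qed

lemma glue_VC:
  assumes j: "j < k" and s: "s < 6"
  shows "glue s (VC j) \<in> V' \<and> glue s (VC j) \<noteq> VC j \<and> glue s (glue s (VC j)) = VC j
    \<and> {VC j, glue s (VC j)} \<in> E'"
proof -
  consider (A) "a_to_c j s" | (B) "\<not> a_to_c j s" "b_to_c j s" | (C) "\<not> a_to_c j s" "\<not> b_to_c j s"
    by blast
  then show ?thesis
  proof cases
    case A
    have P1: "glue s (VC j) = VA j" using A by simp
    have P2: "glue s (VA j) = VC j" using A unfolding a_to_c_def by simp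
    have e: "{VC j, VA j} \<in> E'" using M_edges_intros(6)[OF j] by (simp add: insert_commute)
    show ?thesis using P1 P2 e j by (simp add: mem_M_vertices)
  next
    case B
    have P1: "glue s (VC j) = VB j" using B by simp
    have P2: "glue s (VB j) = VC j" using B unfolding b_to_c_def by simp
    have e: "{VC j, VB j} \<in> E'" using M_edges_intros(7)[OF j] by (simp add: insert_commute)
    show ?thesis using P1 P2 e j by (simp add: mem_M_vertices)
  next
    case C
    have sh: "s div 2 = free_block j" using c_free(1)[OF j s] C by simp
    obtain m where m: "tree_mate k s (VC j) = (VV m :: 'a mvert)" "m < k - 2"
      "tree_mate k s (VV m) = (VC j :: 'a mvert)"
      "{VC j, VV m} \<in> (tree_edges k :: 'a mvert set set)"
      using tree_mate_VC[OF k_ge_3 j s sh, where 'a='a] by auto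
    have P1: "glue s (VC j) = VV m" using C m by simp
    have P2: "glue s (VV m) = VC j" using m by simp
    show ?thesis using P1 P2 M_edges_intros(8)[OF m(4)] m by (simp add: mem_M_vertices)
  qed
qed

lemma glue_VV:
  assumes m: "m < k - 2" and s: "s < 6"
  shows "glue s (VV m) \<in> V' \<and> glue s (VV m) \<noteq> VV m \<and> glue s (glue s (VV m)) = VV m
    \<and> {VV m, glue s (VV m)} \<in> E'"
proof -
  have "\<not> a_to_c j s \<and> \<not> b_to_c j s" if "j < k" "s div 2 = free_block j" for j
    using c_free(1)[OF that(1) s] that(2) by blast
  then show ?thesis
    using tree_mate_VV[OF k_odd k_ge_3 m s, where 'a='a] M_edges_intros(8)
    by (auto simp: mem_M_vertices)
qed

lemma glue_involution:
  assumes v: "v \<in> V'" and s: "s < 6"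
  shows "glue s v \<in> V' \<and> glue s v \<noteq> v \<and> glue s (glue s v) = v \<and> {v, glue s v} \<in> E'"
proof (cases v)
  case (Old j u) then show ?thesis using glue_Old v s by simp
next
  case (VA j) then show ?thesis using glue_VA v s by (simp add: mem_M_vertices)
next
  case (VB j) then show ?thesis using glue_VB v s by (simp add: mem_M_vertices)
next
  case (VC j) then show ?thesis using glue_VC v s by (simp add: mem_M_vertices)
next
  case (VV m) then show ?thesis using glue_VV v s by (simp add: mem_M_vertices)
qed


definition glued_matching :: "nat \<Rightarrow> 'a mvert set set" where
  "glued_matching s = matching_of V' (glue s)"

lemma perfect_matching_glued: "s < 6 \<Longrightarrow> perfect_matching V' E' (glued_matching s)"
  unfolding glued_matching_def by (rule perfect_matching_matching_of) (use glue_involution in blast)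

lemma card_glued_matching_eq:
  assumes "a \<in> V'" and "\<And>s. s < 6 \<Longrightarrow> glue s a = b \<longleftrightarrow> R s" and "card {s. s < 6 \<and> R s} = 2"
  shows "card {s. s < 6 \<and> {a, b} \<in> glued_matching s} = 2"
proof -
  have "{s. s < 6 \<and> {a, b} \<in> glued_matching s} = {s. s < 6 \<and> R s}"
    using mem_matching_of_iff[of V' "glue _"] glue_involution assms(1,2)
    unfolding glued_matching_def by blast
  then show ?thesis using assms(3) by simp
qed

lemma card_Q_eq: "j < k \<Longrightarrow> {u, w} \<in> E j \<Longrightarrow> card {s. s < 6 \<and> Q j s u = w} = 2"
  using partner_cover.card_q_eq[OF partner] by blast

lemma card_a_to_c: "j < k \<Longrightarrow> card {s. s < 6 \<and> a_to_c j s} = 2"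
proof -
  assume j: "j < k"
  define j' where "j' = (j + 1) mod k"
  have j': "j' < k" using cyc_pred_facts[OF j k_ge_3] unfolding j'_def by auto
  have "card {s. s < 6 \<and> \<not> Q j s (y j) = y0 j \<and> \<not> Q j' s (x j') = x0 j'} = 6 - 2 - 2"
    using card_neither[of 6 "\<lambda>s. Q j s (y j) = y0 j" "\<lambda>s. Q j' s (x j') = x0 j'"]
      no_0_both[OF j] card_Q_eq[OF j] card_Q_eq[OF j']
      partner_cover.choice_edges[OF partner[OF j]] partner_cover.choice_edges[OF partner[OF j']]
    unfolding j'_def by simp
  then show ?thesis unfolding a_to_c_def j'_def by simp
qed

lemma card_b_to_c: "j < k \<Longrightarrow> card {s. s < 6 \<and> b_to_c j s} = 2"
proof -
  assume j: "j < k"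
  define j' where "j' = (j + 1) mod k"
  have j': "j' < k" using cyc_pred_facts[OF j k_ge_3] unfolding j'_def by auto
  have "card {s. s < 6 \<and> \<not> Q j s (y j) = y1 j \<and> \<not> Q j' s (x j') = x1 j'} = 6 - 2 - 2"
    using card_neither[of 6 "\<lambda>s. Q j s (y j) = y1 j" "\<lambda>s. Q j' s (x j') = x1 j'"]
      no_1_both[OF j] card_Q_eq[OF j] card_Q_eq[OF j']
      partner_cover.choice_edges[OF partner[OF j]] partner_cover.choice_edges[OF partner[OF j']]
    unfolding j'_def by simp
  then show ?thesis unfolding b_to_c_def j'_def by simp
qed

lemma card_glued_Old_edge:
  assumes "i < k" "{u, w} \<in> E i" "u \<notin> {x i, y i}" "w \<notin> {x i, y i}"
  shows "card {s. s < 6 \<and> {Old i u, Old i w} \<in> glued_matching s} = 2"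
proof (rule card_glued_matching_eq)
  show "Old i u \<in> V'"
    using graph_edge_endpoints[OF partner_cover.graph[OF partner[OF assms(1)]] assms(2)] assms
    by (simp add: mem_M_vertices)
  show "glue s (Old i u) = Old i w \<longleftrightarrow> Q i s u = w" for s using assms(3,4) by auto
qed (rule card_Q_eq[OF assms(1,2)])

lemma card_glued_gadget_edge:
  assumes j: "j < k"
    and e: "e = {VA j, Old j (y0 j)} \<or> e = {VA j, Old ((j + 1) mod k) (x0 ((j + 1) mod k))}
        \<or> e = {VB j, Old j (y1 j)} \<or> e = {VB j, Old ((j + 1) mod k) (x1 ((j + 1) mod k))}
        \<or> e = {VA j, VC j} \<or> e = {VB j, VC j}"
  shows "card {s. s < 6 \<and> e \<in> glued_matching s} = 2"
proof -
  define j' where "j' = (j + 1) mod k"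
  have j': "j' < k" "cyc_pred k j' = j" "j' \<noteq> j" "cyc_pred k j \<noteq> j"
    using cyc_pred_facts[OF j k_ge_3] unfolding j'_def by auto
  note b = partner_cover.choice_facts[OF partner[OF j]]
    and b' = partner_cover.choice_facts[OF partner[OF j'(1)]]
  have E: "{y0 j, y j} \<in> E j" "{y1 j, y j} \<in> E j" "{x0 j', x j'} \<in> E j'" "{x1 j', x j'} \<in> E j'"
    using partner_cover.choice_edges[OF partner[OF j]]
      partner_cover.choice_edges[OF partner[OF j'(1)]]
    by (simp_all add: insert_commute)
  have V: "Old j (y0 j) \<in> V'" "Old j (y1 j) \<in> V'" "Old j' (x0 j') \<in> V'" "Old j' (x1 j') \<in> V'"
    "VA j \<in> V'" "VB j \<in> V'"
    using j j' b b' by (simp_all add: mem_M_vertices)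
  from e consider "e = {Old j (y0 j), VA j}" | "e = {Old j (y1 j), VB j}"
    | "e = {Old j' (x0 j'), VA j}" | "e = {Old j' (x1 j'), VB j}"
    | "e = {VA j, VC j}" | "e = {VB j, VC j}"
    unfolding j'_def by (auto simp: insert_commute)
  then show ?thesis
  proof cases
    case 1 show ?thesis unfolding 1
      by (rule card_glued_matching_eq[OF V(1) _ card_Q_eq[OF j E(1)]]) (use b j' in auto)
  next
    case 2 show ?thesis unfolding 2
      by (rule card_glued_matching_eq[OF V(2) _ card_Q_eq[OF j E(2)]]) (use b j' in auto)
  next
    case 3 show ?thesis unfolding 3
      by (rule card_glued_matching_eq[OF V(3) _ card_Q_eq[OF j'(1) E(3)]]) (use b' j' in auto)
  next
    case 4 show ?thesis unfolding 4
      by (rule card_glued_matching_eq[OF V(4) _ card_Q_eq[OF j'(1) E(4)]]) (use b' j' in auto)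
  next
    case 5 show ?thesis unfolding 5
      by (rule card_glued_matching_eq[OF V(5) _ card_a_to_c[OF j]])
        (auto simp: a_to_c_def)
  next
    case 6 show ?thesis unfolding 6
      by (rule card_glued_matching_eq[OF V(6) _ card_b_to_c[OF j]])
        (auto simp: b_to_c_def)
  qed
qed

lemma glue_VC_eq_VV:
  assumes "j < k" "s < 6"
  shows "glue s (VC j) = VV m \<longleftrightarrow> s div 2 = free_block j \<and> tree_mate k s (VC j) = (VV m :: 'a mvert)"
  using c_free[OF assms] by auto

lemma card_glued_tree_edge:
  assumes "e \<in> tree_edges k"
  shows "card {s. s < 6 \<and> e \<in> glued_matching s} = 2"
proof -
  from assms consider "e = {VC 1, VV 0}" | "e = {VC 0, VV (k - 3)}"
    | m where "e = {VV m, VV (Suc m)}" "Suc m < k - 2"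
    | i where "e = {VC i, VV (i - 2)}" "2 \<le> i" "i < k"
    unfolding tree_edges_def by (auto simp: insert_commute)
  then show ?thesis
  proof cases
    case 1
    have "glue s (VC 1) = VV 0 \<longleftrightarrow> s div 2 = 1" if "s < 6" for s
      using glue_VC_eq_VV[of 1 s 0] k_ge_3 that by (auto simp: tree_mate_def free_block_def)
    with card_block[of 1] show ?thesis unfolding 1
      by (intro card_glued_matching_eq) (use k_ge_3 in \<open>simp_all add: mem_M_vertices\<close>)
  next
    case 2
    have "glue s (VC 0) = VV (k - 3) \<longleftrightarrow> s div 2 = 0" if "s < 6" for s
      using glue_VC_eq_VV[of 0 s "k - 3"] k_ge_3 that by (auto simp: tree_mate_def free_block_def)
    with card_block[of 0] show ?thesis unfolding 2
      by (intro card_glued_matching_eq) (use k_ge_3 in \<open>simp_all add: mem_M_vertices\<close>)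
  next
    case 3
    have "glue s (VV m) = VV (Suc m) \<longleftrightarrow> s div 2 = (if even m then 0 else 1)" if "s < 6" for s
    proof -
      have "s div 2 = 0 \<or> s div 2 = 1 \<or> s div 2 = 2" using that by linarith
      then show ?thesis using 3 by (auto simp: tree_mate_def)
    qed
    moreover have "card {s::nat. s < 6 \<and> s div 2 = (if even m then 0 else 1)} = 2"
      by (rule card_block) simp
    ultimately show ?thesis unfolding 3(1)
      by (intro card_glued_matching_eq) (use 3 in \<open>simp_all add: mem_M_vertices\<close>)
  next
    case 4
    have "glue s (VC i) = VV (i - 2) \<longleftrightarrow> s div 2 = 2" if "s < 6" for s
      using glue_VC_eq_VV[of i s "i - 2"] 4 that by (auto simp: tree_mate_def free_block_def)
    with card_block[of 2] show ?thesis unfolding 4(1)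
      by (intro card_glued_matching_eq) (use 4 in \<open>simp_all add: mem_M_vertices\<close>)
  qed
qed

lemma has_fulkerson_cover_glued: "has_fulkerson_cover V' E'"
  unfolding has_fulkerson_cover_def
proof (intro exI conjI allI impI ballI)
  show "perfect_matching V' E' (glued_matching s)" if "s < 6" for s
    using perfect_matching_glued[OF that] .
  fix e assume "e \<in> E'"
  then show "card {s. s < 6 \<and> e \<in> glued_matching s} = 2"
    by (cases rule: M_edges_cases)
      (use card_glued_Old_edge card_glued_gadget_edge card_glued_tree_edge in blast)+
qed

end

lemma junction_cover_of_aligned:
  assumes k: "odd k" "3 \<le> k"
    and Q: "\<And>j. j < k \<Longrightarrow> partner_cover (V j) (E j) (x j) (y j) (x0 j) (x1 j) (y0 j) (y1 j) (Q j)"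
    and xy: "\<And>j s. j < k \<Longrightarrow> s < 6 \<Longrightarrow> Q j s (x j) = y j \<longleftrightarrow> s div 2 = xy_block j"
    and at_x: "\<And>j s. j < k \<Longrightarrow> s < 6 \<Longrightarrow> s div 2 = free_block (cyc_pred k j) \<Longrightarrow>
      Q j s (x j) = x1 j \<longleftrightarrow> (\<not> rho (cyc_pred k j) \<longleftrightarrow> even s)"
    and at_y: "\<And>j s. j < k \<Longrightarrow> s < 6 \<Longrightarrow> s div 2 = free_block j \<Longrightarrow>
      Q j s (y j) = y1 j \<longleftrightarrow> (rho j \<longleftrightarrow> even s)"
  shows "junction_cover k V E x y x0 x1 y0 y1 Q"
proof -
  have junction: "\<not> (Q j s (y j) = x j \<and> Q j' s (x j') = y j') \<and>
      \<not> (Q j s (y j) = y0 j \<and> Q j' s (x j') = x0 j') \<and>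
      \<not> (Q j s (y j) = y1 j \<and> Q j' s (x j') = x1 j') \<and>
      (Q j s (y j) \<noteq> x j \<and> Q j' s (x j') \<noteq> y j' \<longleftrightarrow> s div 2 = free_block j)"
    if j: "j < k" and s: "s < 6" and j'_def: "j' = (j + 1) mod k" for j j' s
  proof -
    have j': "j' < k" "cyc_pred k j' = j" using cyc_pred_facts[OF j k(2)] unfolding j'_def by auto
    have y_side: "Q j s (y j) = x j \<longleftrightarrow> s div 2 = xy_block j"
      using xy[OF j s] partner_cover.q_x_eq_y_iff[OF Q[OF j] s] by simp
    have x_side: "Q j' s (x j') = y j' \<longleftrightarrow> s div 2 = xy_block j'" using xy[OF j'(1) s] .
    have "s div 2 < 3" using s by simp
    then have free: "Q j s (y j) \<noteq> x j \<and> Q j' s (x j') \<noteq> y j' \<longleftrightarrow> s div 2 = free_block j"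
      using y_side x_side xy_block_succ(2)[OF k j] unfolding j'_def by simp
    have bits: "Q j s (y j) = y1 j \<longleftrightarrow> Q j' s (x j') \<noteq> x1 j'" if "s div 2 = free_block j"
      using at_y[OF j s that] at_x[OF j'(1) s] j'(2) that by auto
    note ends = partner_cover.choice_facts[OF Q[OF j]] partner_cover.choice_facts[OF Q[OF j'(1)]]
    have "\<not> (Q j s (y j) = y0 j \<and> Q j' s (x j') = x0 j')"
    proof
      assume h: "Q j s (y j) = y0 j \<and> Q j' s (x j') = x0 j'"
      then have "s div 2 = free_block j" using free ends by auto
      then show False using bits h ends by auto
    qed
    moreover have "\<not> (Q j s (y j) = y1 j \<and> Q j' s (x j') = x1 j')"
    proof
      assume h: "Q j s (y j) = y1 j \<and> Q j' s (x j') = x1 j'"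
      then have "s div 2 = free_block j" using free ends by auto
      then show False using bits h ends by auto
    qed
    moreover have "\<not> (Q j s (y j) = x j \<and> Q j' s (x j') = y j')"
      using y_side x_side xy_block_succ(1)[OF k j] unfolding j'_def by auto
    ultimately show ?thesis using free by blast
  qed
  show ?thesis
    by (rule junction_cover.intro[OF k Q]) (use junction[OF _ _ refl] in blast)+
qed

lemma aligned_permutations_exist:
  assumes k: "odd k" "3 \<le> k"
    and q: "\<And>j. j < k \<Longrightarrow> partner_cover (V j) (E j) (x j) (y j) (x0 j) (x1 j) (y0 j) (y1 j) (q j)"
  obtains f rho where
    "\<And>j. j < k \<Longrightarrow> bij_betw (f j) {..<6} {..<6}"
    "\<And>j s. j < k \<Longrightarrow> s < 6 \<Longrightarrow> q j (f j s) (x j) = y j \<longleftrightarrow> s div 2 = xy_block j"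
    "\<And>j s. j < k \<Longrightarrow> s < 6 \<Longrightarrow> s div 2 = free_block (cyc_pred k j) \<Longrightarrow>
      q j (f j s) (x j) = x1 j \<longleftrightarrow> (\<not> rho (cyc_pred k j) \<longleftrightarrow> even s)"
    "\<And>j s. j < k \<Longrightarrow> s < 6 \<Longrightarrow> s div 2 = free_block j \<Longrightarrow>
      q j (f j s) (y j) = y1 j \<longleftrightarrow> (rho j \<longleftrightarrow> even s)"
proof -
  define bL where "bL j = free_block (cyc_pred k j)" for j
  define bR where "bR j = 3 - xy_block j - bL j" for j
  define good where "good j c g \<longleftrightarrow> bij_betw g {..<6} {..<6} \<and>
     (\<forall>s<6. q j (g s) (x j) = y j \<longleftrightarrow> s div 2 = xy_block j) \<and>
     (\<forall>s<6. s div 2 = bL j \<longrightarrow> (q j (g s) (x j) = x1 j \<longleftrightarrow> c = even s) \<and>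
          (q j (g s) (y j) = y1 j \<longleftrightarrow> (q j (g (2 * bL j)) (y j) = y1 j) = even s)) \<and>
     (\<forall>s<6. s div 2 = bR j \<longrightarrow> (q j (g s) (y j) = y1 j \<longleftrightarrow> False = even s))" for j c g
  have good_exists: "\<exists>g. good j c g" if j: "j < k" for j c
  proof -
    have "xy_block j < 3" "bL j < 3" "xy_block j \<noteq> bL j"
      using xy_block_less free_block_less xy_block_neq_free_block_pred[OF k j] unfolding bL_def
      by auto
    then have "bR j < 3" "xy_block j \<noteq> bR j" "bL j \<noteq> bR j" unfolding bR_def by arith+
    with \<open>xy_block j < 3\<close> \<open>bL j < 3\<close> \<open>xy_block j \<noteq> bL j\<close>
    show ?thesis using partner_cover.arrangement_exists[OF q[OF j],
      of "xy_block j" "bL j" "bR j" c False]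
      unfolding good_def by blast
  qed
  define F where "F j c = (SOME g. good j c g)" for j c
  have F: "good j c (F j c)" if "j < k" for j c
    unfolding F_def by (rule someI_ex[OF good_exists[OF that]])
  txt \<open>rho j is the order in which y_j uses its two remaining edges in the free block of
    junction j.  For j \<le> 2 the x- and y-sides of G_j occupy different blocks and this order is
    chosen freely; for j \<ge> 3 both lie in block 2, so it is forced by the order at x_j, which in
    turn is dictated by rho (j - 1).\<close>
  define rho where
    "rho = rec_nat False (\<lambda>n r. 2 \<le> n \<and> q (Suc n) (F (Suc n) (\<not> r) 4) (y (Suc n)) = y1 (Suc n))"
  define f where "f j = F j (\<not> rho (cyc_pred k j))" for j
  have rho_small: "rho j = False" if "j \<le> 2" for j
    using that unfolding rho_def by (cases j) auto
  have rho_large: "rho j = (q j (f j 4) (y j) = y1 j)" if j3: "3 \<le> j" and j: "j < k" for j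
  proof -
    obtain n where "j = Suc n" using j3 by (cases j) auto
    then show ?thesis unfolding rho_def f_def using j3 cyc_pred_facts(1)[OF j k(2)] by simp
  qed
  have G: "good j (\<not> rho (cyc_pred k j)) (f j)" if "j < k" for j
    unfolding f_def using F[OF that] .
  show ?thesis
  proof
    fix j assume "j < k"
    then show "bij_betw (f j) {..<6} {..<6}" using G[unfolded good_def] by blast
  next
    fix j s :: nat assume "j < k" "s < 6"
    then show "q j (f j s) (x j) = y j \<longleftrightarrow> s div 2 = xy_block j"
      using G[unfolded good_def, THEN conjunct2, THEN conjunct1] by blast
  next
    fix j s :: nat assume "j < k" "s < 6" "s div 2 = free_block (cyc_pred k j)"
    then show "q j (f j s) (x j) = x1 j \<longleftrightarrow> (\<not> rho (cyc_pred k j) \<longleftrightarrow> even s)"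
      using G[unfolded good_def bL_def, THEN conjunct2, THEN conjunct2, THEN conjunct1] by blast
  next
    fix j s :: nat assume j: "j < k" and s: "s < 6" and free: "s div 2 = free_block j"
    note G_x = G[OF j, unfolded good_def, THEN conjunct2, THEN conjunct2,
      THEN conjunct1, rule_format, OF s]
      and G_y = G[OF j, unfolded good_def, THEN conjunct2, THEN conjunct2,
        THEN conjunct2, rule_format, OF s]
    show "q j (f j s) (y j) = y1 j \<longleftrightarrow> (rho j \<longleftrightarrow> even s)"
    proof (cases "j \<le> 2")
      case True
      then have "s div 2 = bR j" using free free_block_small[OF k(2) j] unfolding bR_def bL_def
        by simp
      then show ?thesis using G_y rho_small[OF True] by simp
    next
      case False
      then have "s div 2 = bL j" "bL j = 2" using free free_block_large[OF k(2) j]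
        unfolding bL_def by auto
      then show ?thesis using G_x rho_large[OF _ j] False by simp
    qed
  qed
qed

theorem theorem3p2:
  fixes k :: nat
    and V :: "nat \<Rightarrow> 'a set" and E :: "nat \<Rightarrow> 'a set set"
    and x y x0 x1 y0 y1 :: "nat \<Rightarrow> 'a"
  assumes "odd k" and "k \<ge> 3"
    and "\<And>i. i < k \<Longrightarrow> cubic (V i) (E i)"
    and "\<And>i. i < k \<Longrightarrow> bridgeless (V i) (E i)"
    and "\<And>i. i < k \<Longrightarrow> cyclically_4_edge_connected (V i) (E i)"
    and "\<And>i. i < k \<Longrightarrow> has_fulkerson_cover (V i) (E i)"
    and "\<And>i. i < k \<Longrightarrow> valid_choice (V i) (E i) (x i) (y i) (x0 i) (x1 i) (y0 i) (y1 i)"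
  shows "has_fulkerson_cover (M_vertices k V x y) (M_edges k E x y x0 x1 y0 y1)"
proof -
  have "\<forall>i. \<exists>q. i < k \<longrightarrow> partner_cover (V i) (E i) (x i) (y i) (x0 i) (x1 i) (y0 i) (y1 i) q"
    using partner_cover_of_fulkerson_cover assms(3,6,7) by metis
  then obtain q where q: "\<And>i. i < k \<Longrightarrow>
      partner_cover (V i) (E i) (x i) (y i) (x0 i) (x1 i) (y0 i) (y1 i) (q i)"
    by metis
  obtain f rho where f: "\<And>j. j < k \<Longrightarrow> bij_betw (f j) {..<6} {..<6}"
    and aligned: "\<And>j s. j < k \<Longrightarrow> s < 6 \<Longrightarrow> q j (f j s) (x j) = y j \<longleftrightarrow> s div 2 = xy_block j"
      "\<And>j s. j < k \<Longrightarrow> s < 6 \<Longrightarrow> s div 2 = free_block (cyc_pred k j) \<Longrightarrow>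
        q j (f j s) (x j) = x1 j \<longleftrightarrow> (\<not> rho (cyc_pred k j) \<longleftrightarrow> even s)"
      "\<And>j s. j < k \<Longrightarrow> s < 6 \<Longrightarrow> s div 2 = free_block j \<Longrightarrow>
        q j (f j s) (y j) = y1 j \<longleftrightarrow> (rho j \<longleftrightarrow> even s)"
    using aligned_permutations_exist[where V = V and E = E and q = q, OF assms(1,2) q] by blast
  have "partner_cover (V j) (E j) (x j) (y j) (x0 j) (x1 j) (y0 j) (y1 j) (\<lambda>s. q j (f j s))"
    if "j < k" for j
    using partner_cover.permute[OF q[OF that] f[OF that]] .
  then have "junction_cover k V E x y x0 x1 y0 y1 (\<lambda>j s. q j (f j s))"
    by (rule junction_cover_of_aligned[where V = V and E = E and Q = "\<lambda>j s. q j (f j s)",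
          OF assms(1,2) _ aligned])
  then show ?thesis by (rule junction_cover.has_fulkerson_cover_glued)
qed

end
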